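(* Let $d\ge1$, $\lambda>0$, $\delta>0$, and let $f:\mathbb{R}^d\to\mathbb{R}$ satisfy: (A1) $f$ is continuous and has at least one minimizer; (A2) $\int_{\mathbb{R}^d}\exp(-f(y)/\delta)\,dy<+\infty$. Then $\operatorname{zprox}^\delta_{\lambda,f}:\mathbb{R}^d\to\mathbb{R}^d$ is a smooth diffeomorphism, i.e. it is $C^\infty$, bijective, and its inverse is $C^\infty$.
   Context: The zeroth-order proximal operator is $\operatorname{zprox}^\delta_{\lambda,f}(x)=\dfrac{\mathbb{E}_{y\sim\mathcal N(x,\lambda\delta I)}[y\exp(-f(y)/\delta)]}{\mathbb{E}_{y\sim\mathcal N(x,\lambda\delta I)}[\exp(-f(y)/\delta)]}$, where $\mathcal N(x,\lambda\delta I)$ is the Gaussian with mean $x$ and covariance $\lambda\delta I$. *)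

theory Defs
  imports "HOL-Analysis.Analysis"
begin

definition gauss_density :: "real \<Rightarrow> 'a::euclidean_space \<Rightarrow> 'a \<Rightarrow> real" where
  "gauss_density s x y =
     (2 * pi * s) powr (- real DIM('a) / 2) * exp (- (norm (y - x))\<^sup>2 / (2 * s))"

definition zprox :: "real \<Rightarrow> real \<Rightarrow> ('a::euclidean_space \<Rightarrow> real) \<Rightarrow> 'a \<Rightarrow> 'a" where
  "zprox \<delta> lam f x =
     (1 / (LINT y|lborel. gauss_density (lam * \<delta>) x y * exp (- f y / \<delta>))) *\<^sub>R
     (LINT y|lborel. (gauss_density (lam * \<delta>) x y * exp (- f y / \<delta>)) *\<^sub>R y)"

fun Ck :: "nat \<Rightarrow> ('a::real_normed_vector \<Rightarrow> 'b::real_normed_vector) \<Rightarrow> bool" where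
  "Ck 0 f = continuous_on UNIV f"
| "Ck (Suc k) f = (f differentiable_on UNIV \<and>
      (\<forall>v. Ck k (\<lambda>x. frechet_derivative f (at x) v)))"

definition smooth_map :: "('a::real_normed_vector \<Rightarrow> 'b::real_normed_vector) \<Rightarrow> bool" where
  "smooth_map f = (\<forall>k. Ck k f)"

end

theory Submission
  imports Defs
begin

text \<open>
  Write s = lam * \<delta> and \<nu> = exp (- f / \<delta>). Up to a factor depending only on x, the
  integrands defining zprox x are exp (x \<bullet> y / s - |y|^2 / (2 s)) \<nu>(y) and y times it, so zprox
  is the mean of an exponentially tilted measure, i.e. the gradient of s log Z with
  Z(x) = \<integral> exp (x \<bullet> y / s - |y|^2 / (2 s)) \<nu>(y) dy. The Gaussian factor allows differentiation
  under the integral sign to any order, so Z and the mean are smooth. The derivative of the mean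
  is the covariance of the tilted probability measure divided by s, which is positive definite:
  the mean is injective and its derivative is invertible. It is surjective because for every z
  the function exp (- x \<bullet> z / s) Z(x) grows like exp (|x| / s), hence has a minimiser, and at a
  critical point the mean equals z. Finally, a smooth bijection of R^d with invertible derivative
  has a smooth inverse: invariance of domain makes the inverse continuous, the inverse function
  rule differentiates it, and smoothness follows by induction on the order.
\<close>

section \<open>The classes C^k\<close>

lemma Ck_SucI:
  assumes "\<And>x. (f has_derivative D x) (at x)" and "\<And>v. Ck k (\<lambda>x. D x v)"
  shows "Ck (Suc k) f"
proof -
  have "frechet_derivative f (at x) = D x" for x
    using assms(1) frechet_derivative_at by metis
  then show ?thesis
    using assms by (auto simp: differentiable_on_def differentiable_def)
qed

lemma Ck_Suc_has_derivative:
  "Ck (Suc k) f \<Longrightarrow> (f has_derivative frechet_derivative f (at x)) (at x)"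
  by (simp add: differentiable_on_def frechet_derivative_works)

lemma Ck_imp_continuous_on: "Ck k f \<Longrightarrow> continuous_on UNIV f"
  by (cases k) (auto intro: differentiable_imp_continuous_on)

lemma Ck_SucD: "Ck (Suc k) f \<Longrightarrow> Ck k f"
proof (induction k arbitrary: f)
  case 0
  then show ?case by (simp add: differentiable_imp_continuous_on)
next
  case (Suc k)
  then show ?case by simp
qed

lemma Ck_const: "Ck k (\<lambda>x. c)"
proof (induction k arbitrary: c)
  case (Suc k)
  show ?case by (rule Ck_SucI[OF has_derivative_const Suc.IH])
qed simp

lemma Ck_add:
  fixes f g :: "'a::real_normed_vector \<Rightarrow> 'b::real_normed_vector"
  shows "Ck k f \<Longrightarrow> Ck k g \<Longrightarrow> Ck k (\<lambda>x. f x + g x)"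
proof (induction k arbitrary: f g)
  case 0
  then show ?case by (simp add: continuous_on_add)
next
  case (Suc k)
  show ?case
    by (rule Ck_SucI[OF has_derivative_add[OF Ck_Suc_has_derivative Ck_Suc_has_derivative]])
      (use Suc in auto)
qed

lemma Ck_scaleR:
  fixes a :: "'a::real_normed_vector \<Rightarrow> real" and g :: "'a \<Rightarrow> 'b::real_normed_vector"
  shows "Ck k a \<Longrightarrow> Ck k g \<Longrightarrow> Ck k (\<lambda>x. a x *\<^sub>R g x)"
proof (induction k arbitrary: a g)
  case 0
  then show ?case by (simp add: continuous_on_scaleR)
next
  case (Suc k)
  have "Ck k a" "Ck k g"
    using Suc.prems Ck_SucD by blast+
  then show ?case
    by (intro Ck_SucI[OF has_derivative_scaleR[OF Ck_Suc_has_derivative Ck_Suc_has_derivative]])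
      (use Suc in \<open>auto intro!: Ck_add Suc.IH\<close>)
qed

lemma Ck_mult:
  fixes a b :: "'a::real_normed_vector \<Rightarrow> real"
  shows "Ck k a \<Longrightarrow> Ck k b \<Longrightarrow> Ck k (\<lambda>x. a x * b x)"
  using Ck_scaleR[of k a b] by simp

lemma Ck_sum:
  fixes f :: "'i \<Rightarrow> 'a::real_normed_vector \<Rightarrow> 'b::real_normed_vector"
  shows "(\<And>i. i \<in> S \<Longrightarrow> Ck k (f i)) \<Longrightarrow> Ck k (\<lambda>x. \<Sum>i\<in>S. f i x)"
  by (induction S rule: infinite_finite_induct) (simp_all add: Ck_const Ck_add)

lemma Ck_bounded_linear:
  fixes g :: "'a::real_normed_vector \<Rightarrow> 'b::real_normed_vector" and L :: "'b \<Rightarrow> 'c::real_normed_vector"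
  assumes L: "bounded_linear L"
  shows "Ck k g \<Longrightarrow> Ck k (\<lambda>x. L (g x))"
proof (induction k arbitrary: g)
  case 0
  then show ?case using L by (simp add: bounded_linear.continuous_on)
next
  case (Suc k)
  show ?case
    by (rule Ck_SucI[OF bounded_linear.has_derivative[OF L Ck_Suc_has_derivative]])
      (use Suc in auto)
qed

lemma Ck_inverse:
  fixes a :: "'a::real_normed_vector \<Rightarrow> real"
  shows "Ck k a \<Longrightarrow> (\<And>x. a x \<noteq> 0) \<Longrightarrow> Ck k (\<lambda>x. inverse (a x))"
proof (induction k arbitrary: a)
  case 0
  then show ?case by (simp add: continuous_on_inverse)
next
  case (Suc k)
  have "Ck k (\<lambda>x. inverse (a x))"
    using Suc Ck_SucD by blast
  then show ?case
    by (intro Ck_SucI[OF Deriv.has_derivative_inverse[OF Suc.prems(2) Ck_Suc_has_derivative[OF Suc.prems(1)]]])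
      (use Suc in \<open>auto intro!: Ck_mult Ck_bounded_linear[of uminus] bounded_linear_minus bounded_linear_ident\<close>)
qed

lemma linear_eq_sum_Basis:
  fixes L :: "'b::euclidean_space \<Rightarrow> 'c::real_normed_vector"
  assumes "linear L"
  shows "L w = (\<Sum>i\<in>Basis. (w \<bullet> i) *\<^sub>R L i)"
proof -
  have "L w = L (\<Sum>i\<in>Basis. (w \<bullet> i) *\<^sub>R i)"
    by (simp add: euclidean_representation)
  also have "\<dots> = (\<Sum>i\<in>Basis. (w \<bullet> i) *\<^sub>R L i)"
    using assms by (simp add: linear_sum linear_scale)
  finally show ?thesis .
qed

lemma Ck_compose:
  fixes \<Phi> :: "'b::euclidean_space \<Rightarrow> 'c::real_normed_vector" and h :: "'a::real_normed_vector \<Rightarrow> 'b"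
  shows "Ck k \<Phi> \<Longrightarrow> Ck k h \<Longrightarrow> Ck k (\<lambda>x. \<Phi> (h x))"
proof (induction k arbitrary: \<Phi> h)
  case 0
  then show ?case by (auto intro: continuous_on_compose2)
next
  case (Suc k)
  let ?D\<Phi> = "\<lambda>y. frechet_derivative \<Phi> (at y)" and ?Dh = "\<lambda>x. frechet_derivative h (at x)"
  have "((\<lambda>x. \<Phi> (h x)) has_derivative (\<lambda>v. ?D\<Phi> (h x) (?Dh x v))) (at x)" for x
    using diff_chain_at[OF Ck_Suc_has_derivative[OF Suc.prems(2)] Ck_Suc_has_derivative[OF Suc.prems(1)]]
    by (simp add: o_def)
  moreover have "?D\<Phi> (h x) (?Dh x v) = (\<Sum>i\<in>Basis. (?Dh x v \<bullet> i) *\<^sub>R ?D\<Phi> (h x) i)" for x v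
    using Ck_Suc_has_derivative[OF Suc.prems(1)] has_derivative_linear linear_eq_sum_Basis by blast
  moreover have "Ck k (\<lambda>x. \<Sum>i\<in>Basis. (?Dh x v \<bullet> i) *\<^sub>R ?D\<Phi> (h x) i)" for v
    using Suc Ck_SucD[OF Suc.prems(2)]
    by (auto intro!: Ck_sum Ck_scaleR Ck_bounded_linear[of "\<lambda>z. z \<bullet> _"])
  ultimately show ?case
    by (intro Ck_SucI) auto
qed

section \<open>Continuous functions of polynomial growth\<close>

definition continuous_poly_growth :: "('a::real_normed_vector \<Rightarrow> 'b::real_normed_vector) \<Rightarrow> bool" where
  "continuous_poly_growth p \<longleftrightarrow>
     continuous_on UNIV p \<and> (\<exists>C n. \<forall>y. norm (p y) \<le> C * (1 + norm y) ^ n)"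

lemma continuous_poly_growth_const: "continuous_poly_growth (\<lambda>_. c)"
  unfolding continuous_poly_growth_def
  by (intro conjI continuous_intros exI[of _ "norm c"] exI[of _ 0]) auto

lemma continuous_poly_growth_bounded_linear:
  assumes "bounded_linear L"
  shows "continuous_poly_growth L"
proof -
  obtain K where K: "\<And>y. norm (L y) \<le> norm y * K"
    using bounded_linear.bounded[OF assms] by blast
  have "norm (L y) \<le> \<bar>K\<bar> * (1 + norm y) ^ 1" for y
  proof -
    have "norm y * K \<le> norm y * \<bar>K\<bar>"
      by (intro mult_left_mono) auto
    also have "\<dots> \<le> \<bar>K\<bar> * (1 + norm y) ^ 1"
      by (simp add: mult_left_mono mult.commute)
    finally show ?thesis using K[of y] by linarith
  qed
  moreover have "continuous_on UNIV L"
    using assms by (rule linear_continuous_on)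
  ultimately show ?thesis
    unfolding continuous_poly_growth_def by blast
qed

lemma continuous_poly_growth_scaleR:
  fixes q :: "'a::real_normed_vector \<Rightarrow> real" and p :: "'a \<Rightarrow> 'b::real_normed_vector"
  assumes "continuous_poly_growth q" and "continuous_poly_growth p"
  shows "continuous_poly_growth (\<lambda>y. q y *\<^sub>R p y)"
proof -
  obtain C m where C: "\<And>y. norm (q y) \<le> C * (1 + norm y) ^ m"
    using assms(1) unfolding continuous_poly_growth_def by blast
  obtain D n where D: "\<And>y. norm (p y) \<le> D * (1 + norm y) ^ n"
    using assms(2) unfolding continuous_poly_growth_def by blast
  have "norm (q y *\<^sub>R p y) \<le> (C * D) * (1 + norm y) ^ (m + n)" for y
  proof -
    have "norm (q y *\<^sub>R p y) \<le> (C * (1 + norm y) ^ m) * (D * (1 + norm y) ^ n)"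
      unfolding norm_scaleR
      by (intro mult_mono C[unfolded real_norm_def] D) (auto intro: order_trans[OF norm_ge_zero C])
    then show ?thesis by (simp add: power_add mult_ac)
  qed
  moreover have "continuous_on UNIV (\<lambda>y. q y *\<^sub>R p y)"
    using assms unfolding continuous_poly_growth_def by (auto intro: continuous_on_scaleR)
  ultimately show ?thesis
    unfolding continuous_poly_growth_def by blast
qed

lemma continuous_poly_growthE:
  assumes "continuous_poly_growth p"
  obtains C n where "C \<ge> 0" and "continuous_on UNIV p" and "\<And>y. norm (p y) \<le> C * (1 + norm y) ^ n"
proof -
  obtain C n where "continuous_on UNIV p" and C: "\<And>y. norm (p y) \<le> C * (1 + norm y) ^ n"
    using assms unfolding continuous_poly_growth_def by blast
  moreover have "C \<ge> 0"
    using C[of 0] norm_ge_zero[of "p 0"] by (simp del: norm_ge_zero)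
  ultimately show thesis using that by blast
qed

lemma continuous_poly_growth_inner_scaleR:
  assumes "continuous_poly_growth p"
  shows "continuous_poly_growth (\<lambda>y. (h \<bullet> y / c) *\<^sub>R p y)"
proof -
  have "bounded_linear (\<lambda>y. h \<bullet> y / c)"
    using bounded_linear_inner_right[of "h /\<^sub>R c"] by (simp add: divide_inverse mult.commute)
  then show ?thesis
    by (intro continuous_poly_growth_scaleR[OF continuous_poly_growth_bounded_linear] assms)
qed

lemma continuous_poly_growth_mult:
  fixes q p :: "'a::real_normed_vector \<Rightarrow> real"
  shows "continuous_poly_growth q \<Longrightarrow> continuous_poly_growth p \<Longrightarrow> continuous_poly_growth (\<lambda>y. q y * p y)"
  using continuous_poly_growth_scaleR[of q p] by simp

lemma continuous_poly_growth_add: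
  fixes p q :: "'a::real_normed_vector \<Rightarrow> 'b::real_normed_vector"
  assumes "continuous_poly_growth p" and "continuous_poly_growth q"
  shows "continuous_poly_growth (\<lambda>y. p y + q y)"
proof -
  obtain C m where "C \<ge> 0" "continuous_on UNIV p" and C: "\<And>y. norm (p y) \<le> C * (1 + norm y) ^ m"
    using continuous_poly_growthE[OF assms(1)] by blast
  obtain D n where "D \<ge> 0" "continuous_on UNIV q" and D: "\<And>y. norm (q y) \<le> D * (1 + norm y) ^ n"
    using continuous_poly_growthE[OF assms(2)] by blast
  have "norm (p y + q y) \<le> (C + D) * (1 + norm y) ^ (m + n)" for y
  proof -
    have "(1 + norm y) ^ m \<le> (1 + norm y) ^ (m + n)" and "(1 + norm y) ^ n \<le> (1 + norm y) ^ (m + n)"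
      by (simp_all add: power_increasing)
    then have "C * (1 + norm y) ^ m + D * (1 + norm y) ^ n \<le> (C + D) * (1 + norm y) ^ (m + n)"
      using \<open>C \<ge> 0\<close> \<open>D \<ge> 0\<close> by (simp add: distrib_right add_mono mult_left_mono)
    then show ?thesis
      using norm_triangle_ineq[of "p y" "q y"] C[of y] D[of y] by linarith
  qed
  moreover have "continuous_on UNIV (\<lambda>y. p y + q y)"
    using \<open>continuous_on UNIV p\<close> \<open>continuous_on UNIV q\<close> by (rule continuous_on_add)
  ultimately show ?thesis
    unfolding continuous_poly_growth_def by blast
qed

lemma continuous_poly_growth_diff:
  fixes p q :: "'a::real_normed_vector \<Rightarrow> 'b::real_normed_vector"
  assumes "continuous_poly_growth p" and "continuous_poly_growth q"
  shows "continuous_poly_growth (\<lambda>y. p y - q y)"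
  using continuous_poly_growth_add[OF assms(1)
      continuous_poly_growth_scaleR[OF continuous_poly_growth_const assms(2)], of "-1"]
  by simp

lemma has_derivative_at_if_quadratic_remainder:
  assumes "bounded_linear L"
    and remainder: "\<And>h. norm h \<le> 1 \<Longrightarrow> norm (f (x + h) - f x - L h) \<le> K * (norm h)\<^sup>2"
  shows "(f has_derivative L) (at x)"
  unfolding has_derivative_at_alt
proof (intro conjI assms allI impI)
  fix e :: real
  assume "e > 0"
  define d where "d = min 1 (e / (\<bar>K\<bar> + 1))"
  show "\<exists>d>0. \<forall>y. norm (y - x) < d \<longrightarrow> norm (f y - f x - L (y - x)) \<le> e * norm (y - x)"
  proof (intro exI[of _ d] conjI allI impI)
    show "d > 0" using \<open>e > 0\<close> by (simp add: d_def)
    fix y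
    assume y: "norm (y - x) < d"
    have "\<bar>K\<bar> * norm (y - x) \<le> e"
    proof -
      have "\<bar>K\<bar> * norm (y - x) \<le> \<bar>K\<bar> * (e / (\<bar>K\<bar> + 1))"
        using y by (intro mult_left_mono) (auto simp: d_def)
      also have "\<dots> \<le> e"
        using \<open>e > 0\<close> by (simp add: field_simps)
      finally show ?thesis .
    qed
    have "K * (norm (y - x))\<^sup>2 \<le> \<bar>K\<bar> * (norm (y - x))\<^sup>2"
      by (intro mult_right_mono) auto
    also have "\<dots> = (\<bar>K\<bar> * norm (y - x)) * norm (y - x)"
      by (simp add: power2_eq_square)
    also have "\<dots> \<le> e * norm (y - x)"
      using \<open>\<bar>K\<bar> * norm (y - x) \<le> e\<close> by (rule mult_right_mono) simp
    finally have "K * (norm (y - x))\<^sup>2 \<le> e * norm (y - x)" .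
    with remainder[of "y - x"] y show "norm (f y - f x - L (y - x)) \<le> e * norm (y - x)"
      by (simp add: d_def)
  qed
qed

lemma integral_ge_on_ball:
  fixes g :: "'a::euclidean_space \<Rightarrow> real"
  assumes "integrable lborel g" and "\<And>y. g y \<ge> 0" and "m \<ge> 0"
    and "\<And>y. y \<in> ball c r \<Longrightarrow> g y \<ge> m"
  shows "(LINT y|lborel. g y) \<ge> m * measure lborel (ball c r)"
proof -
  have "integrable lborel (\<lambda>y. m * indicator (ball c r) y)"
    using emeasure_lborel_ball_finite[of c r]
    by (intro integrable_mult_right integrable_real_indicator) auto
  then have "(LINT y|lborel. m * indicator (ball c r) y) \<le> (LINT y|lborel. g y)"
    by (rule integral_mono) (use assms in \<open>auto simp: indicator_def\<close>)
  then show ?thesis by simp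
qed

lemma integral_pos_if_continuous:
  fixes g :: "'a::euclidean_space \<Rightarrow> real"
  assumes "integrable lborel g" and "\<And>y. g y \<ge> 0" and "continuous_on UNIV g"
    and "g a > 0"
  shows "(LINT y|lborel. g y) > 0"
proof -
  obtain r where r: "r > 0" and near: "\<And>y. dist y a < r \<Longrightarrow> dist (g y) (g a) < g a / 2"
    using continuous_on_iff[THEN iffD1, OF assms(3), rule_format, of a "g a / 2"] assms(4) by auto
  have "g y \<ge> g a / 2" if "y \<in> ball a r" for y
  proof -
    have "\<bar>g y - g a\<bar> < g a / 2"
      using near[of y] that by (simp add: dist_commute dist_real_def abs_minus_commute)
    then show ?thesis by linarith
  qed
  then have "(LINT y|lborel. g y) \<ge> g a / 2 * measure lborel (ball a r)"
    using assms by (intro integral_ge_on_ball) auto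
  moreover have "g a / 2 * measure lborel (ball a r) > 0"
    using content_ball_pos[OF r] assms(4) by simp
  ultimately show ?thesis by linarith
qed

lemma continuous_attains_global_min:
  fixes Q :: "'a::euclidean_space \<Rightarrow> real"
  assumes "continuous_on UNIV Q" and "\<And>x. R < norm x \<Longrightarrow> Q a \<le> Q x"
  obtains m where "\<And>x. Q m \<le> Q x"
proof -
  define K :: "'a set" where "K = cball 0 (max R (norm a))"
  have "a \<in> K" by (simp add: K_def)
  moreover have "compact K" by (simp add: K_def)
  moreover have "continuous_on K Q"
    using assms(1) by (rule continuous_on_subset) simp
  ultimately obtain m where min: "\<And>x. x \<in> K \<Longrightarrow> Q m \<le> Q x"
    using continuous_attains_inf[of K Q] by blast
  have "Q m \<le> Q x" for x
  proof (cases "x \<in> K")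
    case False
    then have "Q a \<le> Q x" using assms(2) by (simp add: K_def)
    then show ?thesis using min[OF \<open>a \<in> K\<close>] by linarith
  qed (use min in blast)
  then show thesis using that by blast
qed

lemma inj_if_derivative_positive_definite:
  fixes F :: "'a::real_inner \<Rightarrow> 'a"
  assumes deriv: "\<And>x. (F has_derivative D x) (at x)"
    and pos: "\<And>x u. u \<noteq> 0 \<Longrightarrow> D x u \<bullet> u > 0"
  shows "inj F"
proof (rule injI, rule ccontr)
  fix x1 x2
  assume eq: "F x1 = F x2" and "x1 \<noteq> x2"
  define u where "u = x2 - x1"
  have "u \<noteq> 0" using \<open>x1 \<noteq> x2\<close> by (simp add: u_def)
  define \<phi> where "\<phi> t = F (x1 + t *\<^sub>R u) \<bullet> u" for t :: real
  have d\<phi>: "(\<phi> has_real_derivative D (x1 + t *\<^sub>R u) u \<bullet> u) (at t)" for t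
  proof -
    have "((\<lambda>t. x1 + t *\<^sub>R u) has_derivative (\<lambda>h. h *\<^sub>R u)) (at t)"
      by (auto intro!: derivative_eq_intros)
    from diff_chain_at[OF this deriv]
    have "(\<phi> has_derivative (\<lambda>h. D (x1 + t *\<^sub>R u) (h *\<^sub>R u) \<bullet> u)) (at t)"
      unfolding \<phi>_def o_def by (rule bounded_linear.has_derivative[OF bounded_linear_inner_left])
    moreover have "D (x1 + t *\<^sub>R u) (h *\<^sub>R u) = h *\<^sub>R D (x1 + t *\<^sub>R u) u" for h
      using deriv has_derivative_linear linear_scale by blast
    ultimately show ?thesis
      by (simp add: has_field_derivative_def mult_commute_abs)
  qed
  have "\<phi> 0 < \<phi> 1"
  proof (rule DERIV_pos_imp_increasing[of 0 1 \<phi>])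
    show "\<exists>d. (\<phi> has_real_derivative d) (at t) \<and> d > 0" for t
      using d\<phi> pos[OF \<open>u \<noteq> 0\<close>] by blast
  qed simp
  moreover have "\<phi> 1 = \<phi> 0"
    using eq by (simp add: \<phi>_def u_def)
  ultimately show False by simp
qed

lemma exists_unit_inner_eq_norm: "\<exists>e::'a::euclidean_space. norm e = 1 \<and> x \<bullet> e = norm x"
proof (cases "x = 0")
  case True
  then show ?thesis
    by (intro exI[of _ "SOME b. b \<in> Basis"]) (simp add: norm_Basis SOME_Basis)
next
  case False
  then show ?thesis
    by (intro exI[of _ "x /\<^sub>R norm x"]) (simp add: dot_square_norm power2_eq_square)
qed

lemma norm_le_inner_on_ball:
  fixes x e y z :: "'a::real_inner"
  assumes "norm e = 1" and "x \<bullet> e = norm x" and "y \<in> ball (z + 2 *\<^sub>R e) 1"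
  shows "y \<in> cball z 3" and "norm x \<le> x \<bullet> (y - z)"
proof -
  define c where "c = z + 2 *\<^sub>R e"
  have "norm (y - c) < 1"
    using assms(3) by (simp add: c_def dist_norm norm_minus_commute)
  then show "y \<in> cball z 3"
    using norm_triangle_ineq[of "y - c" "c - z"] assms(1)
    by (simp add: c_def dist_norm norm_minus_commute)
  have "\<bar>x \<bullet> (y - c)\<bar> \<le> norm x"
    using Cauchy_Schwarz_ineq2[of x "y - c"] mult_left_le[of "norm (y - c)" "norm x"] \<open>norm (y - c) < 1\<close>
    by simp
  then show "norm x \<le> x \<bullet> (y - z)"
    using assms(2) by (simp add: c_def inner_diff_right inner_add_right)
qed

lemma exp_poly_gaussian_bounded:
  fixes s c :: real and n :: nat
  assumes "s > 0"
  shows "\<exists>K. \<forall>r\<ge>0. exp (c * r) * (1 + r) ^ n * exp (- r\<^sup>2 / (2 * s)) \<le> K"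
proof (intro exI allI impI)
  fix r :: real
  assume "r \<ge> 0"
  have "(1 + r) ^ n \<le> exp r ^ n"
    using \<open>r \<ge> 0\<close> by (intro power_mono) (auto simp: exp_ge_add_one_self)
  then have poly: "(1 + r) ^ n \<le> exp (n * r)"
    by (simp add: exp_of_nat_mult)
  have "0 \<le> (r - s * (c + n))\<^sup>2" by simp
  then have quadratic: "(c + n) * r - r\<^sup>2 / (2 * s) \<le> s * (c + n)\<^sup>2 / 2"
    using assms by (simp add: field_simps power2_eq_square)
  have "exp (c * r) * (1 + r) ^ n * exp (- r\<^sup>2 / (2 * s)) \<le> exp (c * r) * exp (n * r) * exp (- r\<^sup>2 / (2 * s))"
    using poly by (intro mult_right_mono mult_left_mono) auto
  also have "\<dots> = exp ((c + n) * r - r\<^sup>2 / (2 * s))"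
    by (simp add: exp_add[symmetric] exp_diff algebra_simps)
  also have "\<dots> \<le> exp (s * (c + n)\<^sup>2 / 2)"
    using quadratic by simp
  finally show "exp (c * r) * (1 + r) ^ n * exp (- r\<^sup>2 / (2 * s)) \<le> exp (s * (c + n)\<^sup>2 / 2)" .
qed

lemma abs_exp_minus_one_minus_le: "\<bar>exp (t::real) - 1 - t\<bar> \<le> t\<^sup>2 * exp \<bar>t\<bar>"
proof -
  obtain u where "\<bar>u\<bar> \<le> \<bar>t\<bar>" and "exp t = (\<Sum>m<2. t ^ m / fact m) + exp u / fact 2 * t ^ 2"
    using Maclaurin_exp_le[of t 2] by blast
  then have remainder: "exp t - 1 - t = exp u * t\<^sup>2 / 2" and "exp u \<le> exp \<bar>t\<bar>"
    by (simp_all add: numeral_2_eq_2)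
  have "exp u * t\<^sup>2 \<le> exp \<bar>t\<bar> * t\<^sup>2"
    using \<open>exp u \<le> exp \<bar>t\<bar>\<close> by (rule mult_right_mono) simp
  moreover have "\<bar>exp u * t\<^sup>2 / 2\<bar> = exp u * t\<^sup>2 / 2" and "0 \<le> exp \<bar>t\<bar> * t\<^sup>2"
    by simp_all
  ultimately show ?thesis
    unfolding remainder by (simp only: mult.commute[of "t\<^sup>2"])
qed

lemma exp_inner_remainder_le:
  fixes h y :: "'a::real_inner"
  assumes "s > 0" and "norm h \<le> 1"
  shows "\<bar>exp (h \<bullet> y / s) - 1 - h \<bullet> y / s\<bar> \<le> (norm h)\<^sup>2 * ((1 + norm y)\<^sup>2 / s\<^sup>2 * exp (norm y / s))"
proof -
  define t where "t = h \<bullet> y / s"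
  have t: "\<bar>t\<bar> \<le> norm h * norm y / s"
    unfolding t_def using assms(1) Cauchy_Schwarz_ineq2[of h y]
    by (simp add: abs_div divide_right_mono)
  have "norm h * norm y \<le> norm y"
    using assms(2) by (simp add: mult_left_le_one_le)
  then have "norm h * norm y / s \<le> norm y / s"
    using assms(1) by (simp add: divide_right_mono)
  then have "exp \<bar>t\<bar> \<le> exp (norm y / s)"
    unfolding exp_le_cancel_iff using t by linarith
  moreover have "t\<^sup>2 \<le> (norm h)\<^sup>2 * (1 + norm y)\<^sup>2 / s\<^sup>2"
  proof -
    have "t\<^sup>2 \<le> (norm h * norm y / s)\<^sup>2"
      using t by (metis abs_ge_zero power2_abs power_mono)
    also have "\<dots> \<le> (norm h * (1 + norm y) / s)\<^sup>2"
      using assms(1) by (intro power_mono divide_right_mono mult_left_mono) auto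
    finally show ?thesis by (simp add: power_mult_distrib power_divide)
  qed
  ultimately have "t\<^sup>2 * exp \<bar>t\<bar> \<le> (norm h)\<^sup>2 * (1 + norm y)\<^sup>2 / s\<^sup>2 * exp (norm y / s)"
    by (intro mult_mono) auto
  then show ?thesis
    using abs_exp_minus_one_minus_le[of t] unfolding t_def by simp
qed

section \<open>Moments of an exponentially tilted Gaussian weight\<close>

text \<open>
  weight x y differs from the density of N(x, s I) at y times \<nu> y only by a factor depending
  on x, which cancels in mean.
\<close>

locale gaussian_tilt =
  fixes s :: real and \<nu> :: "'a::euclidean_space \<Rightarrow> real"
  assumes s_pos: "0 < s" and nu_pos: "\<And>y. 0 < \<nu> y"
    and continuous_nu: "continuous_on UNIV \<nu>" and integrable_nu: "integrable lborel \<nu>"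
begin

definition weight :: "'a \<Rightarrow> 'a \<Rightarrow> real" where
  "weight x y = exp (x \<bullet> y / s) * exp (- (norm y)\<^sup>2 / (2 * s)) * \<nu> y"

definition moment :: "('a \<Rightarrow> 'b::{banach,second_countable_topology}) \<Rightarrow> 'a \<Rightarrow> 'b" where
  "moment p x = (LINT y|lborel. weight x y *\<^sub>R p y)"

lemma weight_pos: "0 < weight x y"
  by (simp add: weight_def nu_pos)

lemma continuous_on_weight: "continuous_on UNIV (weight x)"
  unfolding weight_def using s_pos by (intro continuous_intros continuous_nu) auto

lemma weight_add: "weight (x + h) y = exp (h \<bullet> y / s) * weight x y"
  by (simp add: weight_def inner_add_left add_divide_distrib exp_add)

lemma weight_poly_le: "\<exists>K. \<forall>y. weight x y * exp (c * norm y) * (1 + norm y) ^ n \<le> K * \<nu> y"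
proof -
  obtain K where K: "\<And>r. r \<ge> 0 \<Longrightarrow> exp ((norm x / s + c) * r) * (1 + r) ^ n * exp (- r\<^sup>2 / (2 * s)) \<le> K"
    using exp_poly_gaussian_bounded[OF s_pos] by blast
  have "weight x y * exp (c * norm y) * (1 + norm y) ^ n \<le> K * \<nu> y" for y
  proof -
    have "exp (x \<bullet> y / s) \<le> exp (norm x / s * norm y)"
      using Cauchy_Schwarz_ineq2[of x y] s_pos by (simp add: divide_right_mono)
    define R where "R = exp (c * norm y) * (1 + norm y) ^ n * exp (- (norm y)\<^sup>2 / (2 * s)) * \<nu> y"
    have "R \<ge> 0"
      unfolding R_def using nu_pos[of y] by simp
    have "weight x y * exp (c * norm y) * (1 + norm y) ^ n = exp (x \<bullet> y / s) * R"
      by (simp add: weight_def R_def mult_ac)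
    also have "\<dots> \<le> exp (norm x / s * norm y) * R"
      using \<open>exp (x \<bullet> y / s) \<le> _\<close> \<open>R \<ge> 0\<close> by (rule mult_right_mono)
    also have "\<dots> = (exp ((norm x / s + c) * norm y) * (1 + norm y) ^ n * exp (- (norm y)\<^sup>2 / (2 * s))) * \<nu> y"
      unfolding R_def distrib_right exp_add by (simp add: mult_ac)
    also have "\<dots> \<le> K * \<nu> y"
      using K[of "norm y"] nu_pos[of y] by (intro mult_right_mono) auto
    finally show ?thesis .
  qed
  then show ?thesis by blast
qed

lemma integrable_moment:
  fixes p :: "'a \<Rightarrow> 'b::{banach,second_countable_topology}"
  assumes "continuous_poly_growth p"
  shows "integrable lborel (\<lambda>y. weight x y *\<^sub>R p y)"
proof -
  obtain C n where "C \<ge> 0" and "continuous_on UNIV p" and C: "\<And>y. norm (p y) \<le> C * (1 + norm y) ^ n"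
    using continuous_poly_growthE[OF assms] by blast
  obtain K where K: "\<And>y. weight x y * exp (0 * norm y) * (1 + norm y) ^ n \<le> K * \<nu> y"
    using weight_poly_le by blast
  show ?thesis
  proof (rule Bochner_Integration.integrable_bound[where f="\<lambda>y. C * K * \<nu> y"])
    show "integrable lborel (\<lambda>y. C * K * \<nu> y)"
      using integrable_nu by simp
    have "continuous_on UNIV (\<lambda>y. weight x y *\<^sub>R p y)"
      by (intro continuous_intros continuous_on_weight \<open>continuous_on UNIV p\<close>)
    then show "(\<lambda>y. weight x y *\<^sub>R p y) \<in> borel_measurable lborel"
      by (simp add: borel_measurable_continuous_onI)
    have "norm (weight x y *\<^sub>R p y) \<le> norm (C * K * \<nu> y)" for y
    proof -
      have "norm (weight x y *\<^sub>R p y) \<le> weight x y * (C * (1 + norm y) ^ n)"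
        using C[of y] weight_pos[of x y] by (simp add: mult_left_mono)
      also have "\<dots> \<le> C * (K * \<nu> y)"
        using K[of y] \<open>C \<ge> 0\<close> by (simp add: mult_left_mono mult.left_commute)
      finally show ?thesis
        by simp
    qed
    then show "AE y in lborel. norm (weight x y *\<^sub>R p y) \<le> norm (C * K * \<nu> y)"
      by simp
  qed
qed

lemma moment_add:
  assumes "continuous_poly_growth p" and "continuous_poly_growth q"
  shows "moment (\<lambda>y. p y + q y) x = moment p x + moment q x"
  unfolding moment_def scaleR_add_right
  using integrable_moment[OF assms(1)] integrable_moment[OF assms(2)] by simp

lemma moment_diff:
  assumes "continuous_poly_growth p" and "continuous_poly_growth q"
  shows "moment (\<lambda>y. p y - q y) x = moment p x - moment q x"
  unfolding moment_def scaleR_diff_right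
  using integrable_moment[OF assms(1)] integrable_moment[OF assms(2)] by simp

lemma moment_scaleR: "moment (\<lambda>y. c *\<^sub>R p y) x = c *\<^sub>R moment p x"
proof -
  have "moment (\<lambda>y. c *\<^sub>R p y) x = (LINT y|lborel. c *\<^sub>R (weight x y *\<^sub>R p y))"
    unfolding moment_def by (simp add: mult.commute)
  also have "\<dots> = c *\<^sub>R moment p x"
    unfolding moment_def by (rule integral_scaleR_right)
  finally show ?thesis .
qed

lemma inner_moment:
  assumes "continuous_poly_growth p"
  shows "moment p x \<bullet> v = moment (\<lambda>y. p y \<bullet> v) x"
proof -
  have "(LINT y|lborel. (weight x y *\<^sub>R p y) \<bullet> v) = moment p x \<bullet> v"
    unfolding moment_def by (rule integral_inner_left) (rule integrable_moment[OF assms])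
  then show ?thesis
    unfolding moment_def by simp
qed

lemma moment_pos:
  fixes p :: "'a \<Rightarrow> real"
  assumes "continuous_poly_growth p" and "\<And>y. p y \<ge> 0" and "p a > 0"
  shows "moment p x > 0"
  unfolding moment_def
proof (rule integral_pos_if_continuous[where a=a])
  show "continuous_on UNIV (\<lambda>y. weight x y *\<^sub>R p y)"
    using assms(1) unfolding continuous_poly_growth_def
    by (intro continuous_intros continuous_on_weight) auto
qed (use integrable_moment[OF assms(1)] assms(2,3) less_imp_le[OF weight_pos] weight_pos in \<open>auto intro!: mult_nonneg_nonneg\<close>)

lemma moment_remainder_eq:
  fixes p :: "'a \<Rightarrow> 'b::{banach,second_countable_topology}" and h :: 'a
  assumes "continuous_poly_growth p"
  defines "r \<equiv> \<lambda>y. exp (h \<bullet> y / s) - 1 - h \<bullet> y / s"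
  shows "integrable lborel (\<lambda>y. (weight x y * r y) *\<^sub>R p y)"
    and "moment p (x + h) - moment p x - moment (\<lambda>y. (h \<bullet> y / s) *\<^sub>R p y) x =
      (LINT y|lborel. (weight x y * r y) *\<^sub>R p y)"
proof -
  have pointwise: "weight (x + h) y *\<^sub>R p y - weight x y *\<^sub>R p y - weight x y *\<^sub>R (h \<bullet> y / s) *\<^sub>R p y
      = (weight x y * r y) *\<^sub>R p y" for y
    unfolding weight_add r_def by (simp add: algebra_simps)
  note integrable = integrable_moment[OF assms(1)] integrable_moment[OF continuous_poly_growth_inner_scaleR[OF assms(1)]]
  show "integrable lborel (\<lambda>y. (weight x y * r y) *\<^sub>R p y)"
    unfolding pointwise[symmetric] using integrable by simp
  have "moment p (x + h) - moment p x - moment (\<lambda>y. (h \<bullet> y / s) *\<^sub>R p y) x =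
      (LINT y|lborel. weight (x + h) y *\<^sub>R p y - weight x y *\<^sub>R p y - weight x y *\<^sub>R (h \<bullet> y / s) *\<^sub>R p y)"
    using integrable unfolding moment_def by simp
  also have "\<dots> = (LINT y|lborel. (weight x y * r y) *\<^sub>R p y)"
    by (simp only: pointwise)
  finally show "moment p (x + h) - moment p x - moment (\<lambda>y. (h \<bullet> y / s) *\<^sub>R p y) x =
      (LINT y|lborel. (weight x y * r y) *\<^sub>R p y)" .
qed

lemma moment_remainder:
  fixes p :: "'a \<Rightarrow> 'b::{banach,second_countable_topology}"
  assumes "continuous_poly_growth p"
  shows "\<exists>K. \<forall>h. norm h \<le> 1 \<longrightarrow>
    norm (moment p (x + h) - moment p x - moment (\<lambda>y. (h \<bullet> y / s) *\<^sub>R p y) x) \<le> K * (norm h)\<^sup>2"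
proof -
  obtain C n where "C \<ge> 0" and C: "\<And>y. norm (p y) \<le> C * (1 + norm y) ^ n"
    using continuous_poly_growthE[OF assms] by blast
  obtain K where K: "\<And>y. weight x y * exp (1 / s * norm y) * (1 + norm y) ^ (n + 2) \<le> K * \<nu> y"
    using weight_poly_le by blast
  have "norm (moment p (x + h) - moment p x - moment (\<lambda>y. (h \<bullet> y / s) *\<^sub>R p y) x)
      \<le> (C / s\<^sup>2 * K * integral\<^sup>L lborel \<nu>) * (norm h)\<^sup>2" if "norm h \<le> 1" for h
  proof -
    define r where "r y = exp (h \<bullet> y / s) - 1 - h \<bullet> y / s" for y
    have "norm ((weight x y * r y) *\<^sub>R p y) \<le> (norm h)\<^sup>2 * (C / s\<^sup>2 * K * \<nu> y)" for y
    proof -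
      have "norm ((weight x y * r y) *\<^sub>R p y) = weight x y * \<bar>r y\<bar> * norm (p y)"
        using weight_pos[of x y] by (simp add: abs_mult)
      also have "\<dots> \<le> weight x y * ((norm h)\<^sup>2 * ((1 + norm y)\<^sup>2 / s\<^sup>2 * exp (norm y / s))) * (C * (1 + norm y) ^ n)"
        unfolding r_def using exp_inner_remainder_le[OF s_pos \<open>norm h \<le> 1\<close>, of y] C[of y] weight_pos[of x y]
        by (intro mult_mono mult_left_mono) auto
      also have "\<dots> = (norm h)\<^sup>2 * (C / s\<^sup>2) * (weight x y * exp (1 / s * norm y) * (1 + norm y) ^ (n + 2))"
        by (simp add: power_add power2_eq_square mult_ac)
      also have "\<dots> \<le> (norm h)\<^sup>2 * (C / s\<^sup>2) * (K * \<nu> y)"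
        using K[of y] \<open>C \<ge> 0\<close> by (intro mult_left_mono) auto
      finally show ?thesis by (simp add: mult_ac)
    qed
    then have "norm (LINT y|lborel. (weight x y * r y) *\<^sub>R p y) \<le> (LINT y|lborel. (norm h)\<^sup>2 * (C / s\<^sup>2 * K * \<nu> y))"
      using moment_remainder_eq(1)[OF assms, of x h] integrable_nu unfolding r_def
      by (intro Bochner_Integration.integral_norm_bound_integral) auto
    then show ?thesis
      using moment_remainder_eq(2)[OF assms, of x h] unfolding r_def by (simp add: mult_ac)
  qed
  then show ?thesis by blast
qed

lemma has_derivative_moment:
  fixes p :: "'a \<Rightarrow> 'b::{banach,second_countable_topology}"
  assumes "continuous_poly_growth p"
  shows "(moment p has_derivative (\<lambda>h. moment (\<lambda>y. (h \<bullet> y / s) *\<^sub>R p y) x)) (at x)"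
proof -
  have "moment (\<lambda>y. ((a + b) \<bullet> y / s) *\<^sub>R p y) x =
      moment (\<lambda>y. (a \<bullet> y / s) *\<^sub>R p y) x + moment (\<lambda>y. (b \<bullet> y / s) *\<^sub>R p y) x" for a b
  proof -
    have "(\<lambda>y. ((a + b) \<bullet> y / s) *\<^sub>R p y) = (\<lambda>y. (a \<bullet> y / s) *\<^sub>R p y + (b \<bullet> y / s) *\<^sub>R p y)"
      by (simp add: fun_eq_iff inner_add_left add_divide_distrib scaleR_add_left)
    then show ?thesis
      by (simp only: moment_add continuous_poly_growth_inner_scaleR assms)
  qed
  moreover have "moment (\<lambda>y. ((c *\<^sub>R a) \<bullet> y / s) *\<^sub>R p y) x = c *\<^sub>R moment (\<lambda>y. (a \<bullet> y / s) *\<^sub>R p y) x" for c a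
  proof -
    have "(\<lambda>y. ((c *\<^sub>R a) \<bullet> y / s) *\<^sub>R p y) = (\<lambda>y. c *\<^sub>R (a \<bullet> y / s) *\<^sub>R p y)"
      by (simp add: fun_eq_iff)
    then show ?thesis
      by (simp only: moment_scaleR)
  qed
  ultimately have "linear (\<lambda>h. moment (\<lambda>y. (h \<bullet> y / s) *\<^sub>R p y) x)"
    by (intro linearI)
  obtain K where K: "\<forall>h. norm h \<le> 1 \<longrightarrow>
      norm (moment p (x + h) - moment p x - moment (\<lambda>y. (h \<bullet> y / s) *\<^sub>R p y) x) \<le> K * (norm h)\<^sup>2"
    using moment_remainder[OF assms] by blast
  show ?thesis
  proof (rule has_derivative_at_if_quadratic_remainder)
    show "bounded_linear (\<lambda>h. moment (\<lambda>y. (h \<bullet> y / s) *\<^sub>R p y) x)"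
      using \<open>linear _\<close> by (simp add: linear_conv_bounded_linear)
    show "norm (moment p (x + h) - moment p x - moment (\<lambda>y. (h \<bullet> y / s) *\<^sub>R p y) x) \<le> K * (norm h)\<^sup>2"
      if "norm h \<le> 1" for h
      using K that by blast
  qed
qed

lemma Ck_moment:
  fixes p :: "'a \<Rightarrow> 'b::{banach,second_countable_topology}"
  shows "continuous_poly_growth p \<Longrightarrow> Ck k (moment p)"
proof (induction k arbitrary: p)
  case 0
  have "continuous (at x) (moment p)" for x
    by (rule has_derivative_continuous[OF has_derivative_moment[OF 0]])
  then show ?case
    by (simp add: continuous_on_eq_continuous_at)
next
  case (Suc k)
  show ?case
    by (rule Ck_SucI[OF has_derivative_moment[OF Suc.prems]])
      (intro Suc.IH continuous_poly_growth_inner_scaleR Suc.prems)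
qed

definition Z :: "'a \<Rightarrow> real" where
  "Z = moment (\<lambda>_. 1)"

definition mean :: "'a \<Rightarrow> 'a" where
  "mean x = inverse (Z x) *\<^sub>R moment (\<lambda>y. y) x"

lemma Z_pos: "0 < Z x"
  unfolding Z_def by (rule moment_pos[OF continuous_poly_growth_const]) simp_all

lemma Ck_mean: "Ck k mean"
proof -
  have "Ck k Z"
    unfolding Z_def by (rule Ck_moment[OF continuous_poly_growth_const])
  moreover have "Ck k (moment (\<lambda>y. y))"
    by (rule Ck_moment[OF continuous_poly_growth_bounded_linear[OF bounded_linear_ident]])
  moreover have "Z x \<noteq> 0" for x
    using Z_pos[of x] by simp
  ultimately show ?thesis
    unfolding mean_def[abs_def] by (intro Ck_scaleR Ck_inverse)
qed

lemma has_derivative_Z: "(Z has_derivative (\<lambda>h. moment (\<lambda>y. h \<bullet> y / s) x)) (at x)"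
  using has_derivative_moment[OF continuous_poly_growth_const[of "1::real"], of x] by (simp add: Z_def)

lemma frechet_derivative_mean:
  "frechet_derivative mean (at x) u =
     inverse (Z x) *\<^sub>R moment (\<lambda>y. (u \<bullet> y / s) *\<^sub>R y) x
     - (moment (\<lambda>y. u \<bullet> y / s) x / (Z x)\<^sup>2) *\<^sub>R moment (\<lambda>y. y) x"
proof -
  have "((\<lambda>x. inverse (Z x) *\<^sub>R moment (\<lambda>y. y) x) has_derivative
      (\<lambda>h. inverse (Z x) *\<^sub>R moment (\<lambda>y. (h \<bullet> y / s) *\<^sub>R y) x
         + (- (inverse (Z x) * moment (\<lambda>y. h \<bullet> y / s) x * inverse (Z x))) *\<^sub>R moment (\<lambda>y. y) x)) (at x)"
    using Z_pos[of x] by (intro has_derivative_scaleR Deriv.has_derivative_inverse has_derivative_Z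
        has_derivative_moment continuous_poly_growth_bounded_linear bounded_linear_ident) auto
  then show ?thesis
    unfolding mean_def[abs_def]
    by (simp add: frechet_derivative_at[symmetric] power2_eq_square field_simps)
qed

lemma moment_variance:
  fixes t :: "'a \<Rightarrow> real"
  assumes "continuous_poly_growth t"
  shows "moment (\<lambda>y. (t y - m) * (t y - m)) x = moment (\<lambda>y. t y * t y) x - 2 * m * moment t x + m\<^sup>2 * Z x"
proof -
  have tt: "continuous_poly_growth (\<lambda>y. t y * t y)" and mt: "continuous_poly_growth (\<lambda>y. (2 * m) * t y)"
    by (intro continuous_poly_growth_mult assms continuous_poly_growth_const)+
  have "(\<lambda>y. (t y - m) * (t y - m)) = (\<lambda>y. (t y * t y - (2 * m) * t y) + m\<^sup>2 * 1)"
    by (simp add: fun_eq_iff power2_eq_square algebra_simps)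
  then show ?thesis
    using moment_add[OF continuous_poly_growth_diff[OF tt mt] continuous_poly_growth_const[of "m\<^sup>2"]]
      moment_diff[OF tt mt] moment_scaleR[of "2 * m" t x] moment_scaleR[of "m\<^sup>2" "\<lambda>_. 1::real" x]
    by (simp add: Z_def)
qed

text \<open>
  The quadratic form of the derivative of mean is s / Z x times the variance of y \<mapsto> u \<bullet> y / s
  under the normalised weight.
\<close>

lemma mean_derivative_pos:
  assumes "u \<noteq> 0"
  shows "frechet_derivative mean (at x) u \<bullet> u > 0"
proof -
  define t where "t y = u \<bullet> y / s" for y
  define m where "m = moment t x / Z x"
  have t: "continuous_poly_growth t"
    unfolding t_def using continuous_poly_growth_inner_scaleR[OF continuous_poly_growth_const[of "1::real"]] by simp
  have id: "continuous_poly_growth (\<lambda>y::'a. y)"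
    by (rule continuous_poly_growth_bounded_linear[OF bounded_linear_ident])
  have "(\<lambda>y. (t y *\<^sub>R y) \<bullet> u) = (\<lambda>y. s *\<^sub>R (t y * t y))" and "(\<lambda>y. y \<bullet> u) = (\<lambda>y. s *\<^sub>R t y)"
    using s_pos by (simp_all add: fun_eq_iff t_def inner_commute)
  then have "moment (\<lambda>y. t y *\<^sub>R y) x \<bullet> u = s * moment (\<lambda>y. t y * t y) x"
    and "moment (\<lambda>y. y) x \<bullet> u = s * moment t x"
    using inner_moment[OF continuous_poly_growth_scaleR[OF t id]] inner_moment[OF id]
    by (simp_all only: moment_scaleR, simp_all)
  then have "frechet_derivative mean (at x) u \<bullet> u = s / Z x * moment (\<lambda>y. (t y - m) * (t y - m)) x"
    unfolding frechet_derivative_mean moment_variance[OF t] m_def t_def[symmetric]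
    using Z_pos[of x] by (simp add: inner_diff_left field_simps power2_eq_square)
  moreover have "moment (\<lambda>y. (t y - m) * (t y - m)) x > 0"
  proof (rule moment_pos)
    show "continuous_poly_growth (\<lambda>y. (t y - m) * (t y - m))"
      by (intro continuous_poly_growth_mult continuous_poly_growth_diff t continuous_poly_growth_const)
    define a where "a = (s * (m + 1) / (norm u)\<^sup>2) *\<^sub>R u"
    have "t a = m + 1"
      using assms s_pos by (simp add: a_def t_def power2_norm_eq_inner)
    then show "(t a - m) * (t a - m) > 0"
      by simp
  qed simp
  ultimately show ?thesis
    using Z_pos[of x] s_pos by simp
qed

lemma inj_frechet_derivative_mean: "inj (frechet_derivative mean (at x))"
proof -
  have "linear (frechet_derivative mean (at x))"
    using Ck_Suc_has_derivative[OF Ck_mean[of "Suc 0"]] has_derivative_linear by blast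
  moreover have "u = 0" if "frechet_derivative mean (at x) u = 0" for u
    using mean_derivative_pos[of u x] that by force
  ultimately show ?thesis
    by (simp add: linear_injective_0)
qed

lemma inj_mean: "inj mean"
  using Ck_Suc_has_derivative[OF Ck_mean[of "Suc 0"]] mean_derivative_pos
  by (rule inj_if_derivative_positive_definite)

lemma tilted_Z_lower_bound: "\<exists>\<kappa>>0. \<forall>x. \<kappa> * exp (norm x / s) \<le> exp (- (x \<bullet> z) / s) * Z x"
proof -
  define g where "g y = exp (- (norm y)\<^sup>2 / (2 * s)) * \<nu> y" for y
  have "continuous_on (cball z 3) g"
    unfolding g_def using s_pos by (intro continuous_intros continuous_on_subset[OF continuous_nu]) auto
  then obtain y0 where "y0 \<in> cball z 3" and y0: "\<And>y. y \<in> cball z 3 \<Longrightarrow> g y0 \<le> g y"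
    using continuous_attains_inf[of "cball z 3" g] by fastforce
  have "g y0 > 0"
    unfolding g_def using nu_pos by simp
  define V where "V = measure lborel (ball (0::'a) 1)"
  have "V > 0"
    unfolding V_def by (rule content_ball_pos) simp
  have "g y0 * V * exp (norm x / s) \<le> exp (- (x \<bullet> z) / s) * Z x" for x
  proof -
    obtain e :: 'a where "norm e = 1" and "x \<bullet> e = norm x"
      using exists_unit_inner_eq_norm by blast
    define c where "c = z + 2 *\<^sub>R e"
    have "exp (norm x / s) * g y0 \<le> exp (- (x \<bullet> z) / s) * weight x y" if "y \<in> ball c 1" for y
    proof -
      have "g y0 \<le> g y"
        using y0 norm_le_inner_on_ball(1)[OF \<open>norm e = 1\<close> \<open>x \<bullet> e = norm x\<close>] that by (simp add: c_def)
      have "exp (norm x / s) \<le> exp (x \<bullet> (y - z) / s)"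
        using norm_le_inner_on_ball(2)[OF \<open>norm e = 1\<close> \<open>x \<bullet> e = norm x\<close>] that s_pos
        by (simp add: c_def divide_right_mono)
      then have "exp (norm x / s) * g y0 \<le> exp (x \<bullet> (y - z) / s) * g y"
        using \<open>g y0 \<le> g y\<close> \<open>g y0 > 0\<close> by (intro mult_mono) auto
      also have "\<dots> = exp (- (x \<bullet> z) / s) * weight x y"
        by (simp add: weight_def g_def inner_diff_right diff_divide_distrib exp_diff exp_minus field_simps)
      finally show ?thesis .
    qed
    then have "exp (norm x / s) * g y0 * measure lborel (ball c 1) \<le> (LINT y|lborel. exp (- (x \<bullet> z) / s) * weight x y)"
      using integrable_moment[OF continuous_poly_growth_const[of "1::real"], of x] \<open>g y0 > 0\<close>
      by (intro integral_ge_on_ball) (auto intro!: mult_nonneg_nonneg less_imp_le[OF weight_pos])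
    moreover have "measure lborel (ball c 1) = V"
      unfolding V_def using content_ball_conv_unit_ball[of 1 c] by simp
    ultimately show ?thesis
      by (simp add: Z_def moment_def mult_ac)
  qed
  then show ?thesis
    using \<open>g y0 > 0\<close> \<open>V > 0\<close> by (intro exI[of _ "g y0 * V"]) auto
qed

lemma mean_eq_if_critical:
  assumes "\<And>h. moment (\<lambda>y. h \<bullet> y / s) x = (h \<bullet> z / s) * Z x"
  shows "mean x = z"
proof -
  have "(moment (\<lambda>y. y) x - Z x *\<^sub>R z) \<bullet> h = 0" for h
  proof -
    have "(\<lambda>y. y \<bullet> h) = (\<lambda>y. s *\<^sub>R (h \<bullet> y / s))"
      using s_pos by (simp add: fun_eq_iff inner_commute)
    then have "moment (\<lambda>y. y) x \<bullet> h = s * moment (\<lambda>y. h \<bullet> y / s) x"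
      using inner_moment[OF continuous_poly_growth_bounded_linear[OF bounded_linear_ident]]
      by (simp only: moment_scaleR, simp)
    then show ?thesis
      using assms[of h] s_pos by (simp add: inner_diff_left inner_diff_right inner_commute)
  qed
  then have "moment (\<lambda>y. y) x = Z x *\<^sub>R z"
    by (metis inner_eq_zero_iff right_minus_eq)
  then show ?thesis
    using Z_pos[of x] by (simp add: mean_def)
qed

lemma surj_mean: "surj mean"
proof -
  have "\<exists>x. mean x = z" for z
  proof -
    define Q where "Q x = exp (- (x \<bullet> z) / s) * Z x" for x
    obtain \<kappa> where "\<kappa> > 0" and lower: "\<And>x. \<kappa> * exp (norm x / s) \<le> Q x"
      using tilted_Z_lower_bound[of z] unfolding Q_def by blast
    have "continuous_on UNIV Z"
      unfolding Z_def by (rule Ck_imp_continuous_on[OF Ck_moment[OF continuous_poly_growth_const, of 0]])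
    then have "continuous_on UNIV Q"
      unfolding Q_def[abs_def] using s_pos by (intro continuous_intros) auto
    moreover have "Q 0 \<le> Q x" if "s * Q 0 / \<kappa> < norm x" for x
    proof -
      have "Q 0 < \<kappa> * (norm x / s)"
        using that s_pos \<open>\<kappa> > 0\<close> by (simp add: field_simps)
      also have "\<dots> \<le> \<kappa> * exp (norm x / s)"
      proof (rule mult_left_mono)
        show "norm x / s \<le> exp (norm x / s)"
          using exp_ge_add_one_self[of "norm x / s"] by linarith
      qed (use \<open>\<kappa> > 0\<close> in simp)
      finally show ?thesis
        using lower[of x] by simp
    qed
    ultimately obtain x where min: "\<And>y. Q x \<le> Q y"
      using continuous_attains_global_min by metis
    have "(Q has_derivative (\<lambda>h. exp (- (x \<bullet> z) / s) * (moment (\<lambda>y. h \<bullet> y / s) x - (h \<bullet> z / s) * Z x))) (at x)"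
      unfolding Q_def[abs_def] using has_derivative_Z[of x] s_pos
      by (auto intro!: derivative_eq_intros simp: algebra_simps)
    then have "(\<lambda>h. exp (- (x \<bullet> z) / s) * (moment (\<lambda>y. h \<bullet> y / s) x - (h \<bullet> z / s) * Z x)) = (\<lambda>h. 0)"
      using min by (intro differential_zero_maxmin[of x UNIV]) auto
    then have "moment (\<lambda>y. h \<bullet> y / s) x = (h \<bullet> z / s) * Z x" for h
      by (simp add: fun_eq_iff)
    then show ?thesis
      using mean_eq_if_critical by blast
  qed
  then show ?thesis
    by (metis surj_def)
qed

lemma mean_eq_gauss_density_ratio:
  "mean x = (1 / (LINT y|lborel. gauss_density s x y * \<nu> y)) *\<^sub>R
     (LINT y|lborel. (gauss_density s x y * \<nu> y) *\<^sub>R y)"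
proof -
  define \<kappa> where "\<kappa> = (2 * pi * s) powr (- real DIM('a) / 2) * exp (- (norm x)\<^sup>2 / (2 * s))"
  have "\<kappa> > 0"
    unfolding \<kappa>_def using s_pos by simp
  have density: "gauss_density s x y * \<nu> y = \<kappa> * weight x y" for y
  proof -
    have "- (norm (y - x))\<^sup>2 / (2 * s) = x \<bullet> y / s + (- (norm y)\<^sup>2 / (2 * s)) + (- (norm x)\<^sup>2 / (2 * s))"
      using s_pos by (simp add: power2_norm_eq_inner inner_diff_left inner_diff_right inner_commute field_simps)
    then have "exp (- (norm (y - x))\<^sup>2 / (2 * s)) =
        exp (x \<bullet> y / s) * exp (- (norm y)\<^sup>2 / (2 * s)) * exp (- (norm x)\<^sup>2 / (2 * s))"
      by (simp only: exp_add)
    then show ?thesis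
      unfolding gauss_density_def weight_def \<kappa>_def by (simp only: mult_ac)
  qed
  have "(LINT y|lborel. gauss_density s x y * \<nu> y) = \<kappa> * Z x"
    unfolding density Z_def moment_def by simp
  moreover have "(LINT y|lborel. (gauss_density s x y * \<nu> y) *\<^sub>R y) = \<kappa> *\<^sub>R moment (\<lambda>y. y) x"
    unfolding density moment_def by (simp flip: scaleR_scaleR)
  ultimately show ?thesis
    using \<open>\<kappa> > 0\<close> by (simp add: mean_def divide_inverse)
qed

end

section \<open>Smooth inverses\<close>

locale nondegenerate_smooth_map =
  fixes F :: "'a::euclidean_space \<Rightarrow> 'a"
  assumes smooth: "smooth_map F" and inj_derivative: "\<And>x. inj (frechet_derivative F (at x))"
begin

abbreviation DF :: "'a \<Rightarrow> 'a \<Rightarrow> 'a" where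
  "DF x \<equiv> frechet_derivative F (at x)"

lemma has_derivative_DF: "(F has_derivative DF x) (at x)"
  using smooth Ck_Suc_has_derivative[of 0 F] by (simp add: smooth_map_def)

lemma Ck_DF: "Ck k (\<lambda>x. DF x v)"
proof -
  have "Ck (Suc k) F"
    using smooth by (simp add: smooth_map_def)
  then show ?thesis by simp
qed

lemma linear_DF: "linear (DF x)"
  using has_derivative_DF has_derivative_linear by blast

lemma DF_inv_DF: "DF x (inv (DF x) w) = w"
  using linear_inj_imp_surj[OF linear_DF inj_derivative] by (simp add: surj_f_inv_f)

lemma inv_DF_DF: "inv (DF x) (DF x w) = w"
  using inj_derivative by (simp add: inv_f_f)

lemma linear_inv_DF: "linear (inv (DF x))"
  using linear_DF inj_derivative by (rule eucl.inj_linear_imp_inv_linear)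

text \<open>
  D2F x w h is the second derivative of F at x applied to w and h, expanded in the basis because
  C^k only controls the directional derivatives x \<mapsto> DF x v.
\<close>

definition D2F :: "'a \<Rightarrow> 'a \<Rightarrow> 'a \<Rightarrow> 'a" where
  "D2F x w h = (\<Sum>j\<in>Basis. (w \<bullet> j) *\<^sub>R frechet_derivative (\<lambda>x. DF x j) (at x) h)"

lemma has_derivative_DF_basis:
  "((\<lambda>x. DF x j) has_derivative frechet_derivative (\<lambda>x. DF x j) (at x)) (at x)"
  by (rule Ck_Suc_has_derivative[OF Ck_DF[of "Suc 0"]])

lemma D2F_zero: "D2F x w 0 = 0"
  unfolding D2F_def using has_derivative_DF_basis[THEN has_derivative_linear, THEN linear_0] by simp

text \<open>
  derivative_map is a continuous bijection of 'a \<times> 'a, so by invariance of domain its inverse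
  (x, w) \<mapsto> (x, inv (DF x) w) is continuous; the inverse function rule then differentiates
  x \<mapsto> inv (DF x) w.
\<close>

definition derivative_map :: "'a \<times> 'a \<Rightarrow> 'a \<times> 'a" where
  "derivative_map p = (fst p, DF (fst p) (snd p))"

definition inverse_derivative_map :: "'a \<times> 'a \<Rightarrow> 'a \<times> 'a" where
  "inverse_derivative_map p = (fst p, inv (DF (fst p)) (snd p))"

lemma derivative_map_inverse: "derivative_map (inverse_derivative_map p) = p"
  by (simp add: derivative_map_def inverse_derivative_map_def DF_inv_DF)

lemma inverse_derivative_map_derivative_map: "inverse_derivative_map (derivative_map p) = p"
  by (simp add: derivative_map_def inverse_derivative_map_def inv_DF_DF)

lemma derivative_map_eq_sum:
  "derivative_map p = (fst p, \<Sum>j\<in>Basis. (snd p \<bullet> j) *\<^sub>R DF (fst p) j)"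
  unfolding derivative_map_def by (subst linear_eq_sum_Basis[OF linear_DF]) simp

lemma continuous_on_inverse_derivative_map: "continuous_on UNIV inverse_derivative_map"
proof -
  have "continuous_on UNIV (\<lambda>p::'a \<times> 'a. DF (fst p) j)" for j
    using continuous_on_compose2[OF Ck_imp_continuous_on[OF Ck_DF[of 0]] continuous_on_fst[OF continuous_on_id]]
    by simp
  then have "continuous_on UNIV derivative_map"
    unfolding derivative_map_eq_sum[abs_def] by (intro continuous_intros)
  moreover have "range derivative_map = UNIV"
    by (metis derivative_map_inverse surj_def)
  ultimately show ?thesis
    using continuous_on_inverse_open[of UNIV derivative_map inverse_derivative_map]
    by (simp add: inverse_derivative_map_derivative_map)
qed

lemma has_derivative_derivative_map:
  "(derivative_map has_derivative (\<lambda>d. (fst d, DF x (snd d) + D2F x w (fst d)))) (at (x, w))"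
proof -
  have dj: "((\<lambda>p. DF (fst p) j) has_derivative (\<lambda>d. frechet_derivative (\<lambda>x. DF x j) (at x) (fst d))) (at (x, w))" for j
    using has_derivative_compose[OF has_derivative_fst[OF has_derivative_ident, of "at (x, w)"]
        has_derivative_DF_basis[of j "fst (x, w)"]]
    by simp
  have "((\<lambda>p. (snd p \<bullet> j) *\<^sub>R DF (fst p) j) has_derivative
      (\<lambda>d. (w \<bullet> j) *\<^sub>R frechet_derivative (\<lambda>x. DF x j) (at x) (fst d) + (snd d \<bullet> j) *\<^sub>R DF x j)) (at (x, w))" for j
    using has_derivative_scaleR[OF has_derivative_inner_left[OF has_derivative_snd[OF has_derivative_ident]] dj]
    by simp
  then have "(derivative_map has_derivative (\<lambda>d. (fst d, \<Sum>j\<in>Basis.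
      (w \<bullet> j) *\<^sub>R frechet_derivative (\<lambda>x. DF x j) (at x) (fst d) + (snd d \<bullet> j) *\<^sub>R DF x j))) (at (x, w))"
    unfolding derivative_map_eq_sum[abs_def]
    by (intro has_derivative_Pair has_derivative_fst[OF has_derivative_ident] has_derivative_sum)
  moreover have "DF x (snd d) + D2F x w (fst d) = (\<Sum>j\<in>Basis.
      (w \<bullet> j) *\<^sub>R frechet_derivative (\<lambda>x. DF x j) (at x) (fst d) + (snd d \<bullet> j) *\<^sub>R DF x j)" for d
    unfolding D2F_def by (subst linear_eq_sum_Basis[OF linear_DF]) (simp add: sum.distrib)
  ultimately show ?thesis
    by simp
qed

lemma has_derivative_inverse_derivative_map:
  obtains L' where "(inverse_derivative_map has_derivative L') (at (x, w))"
    and "\<And>d. (fst (L' d), DF x (snd (L' d)) + D2F x (inv (DF x) w) (fst (L' d))) = d"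
proof -
  define L where "L d = (fst d, DF x (snd d) + D2F x (inv (DF x) w) (fst d))" for d
  have L: "(derivative_map has_derivative L) (at (inverse_derivative_map (x, w)))"
    unfolding L_def inverse_derivative_map_def by (simp add: has_derivative_derivative_map)
  have "inj L"
  proof -
    have "d = 0" if "L d = 0" for d
      using that inj_derivative[of x] linear_DF[of x] D2F_zero
      by (auto simp: L_def prod_eq_iff linear_injective_0)
    then show ?thesis
      using has_derivative_linear[OF L] by (simp add: linear_injective_0)
  qed
  then obtain L' where "linear L'" and "L' \<circ> L = id"
    using linear_injective_left_inverse has_derivative_linear[OF L] by blast
  then have "L (L' d) = d" for d
    using linear_inj_imp_surj[OF has_derivative_linear[OF L] \<open>inj L\<close>]
    by (metis comp_apply id_apply surj_def)
  moreover have "(inverse_derivative_map has_derivative L') (at (x, w))"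
  proof (rule has_derivative_inverse_basic[where g=inverse_derivative_map and y="(x, w)" and T=UNIV, OF L])
    show "bounded_linear L'"
      using \<open>linear L'\<close> by (simp add: linear_conv_bounded_linear)
    show "continuous (at (x, w)) inverse_derivative_map"
      using continuous_on_inverse_derivative_map by (simp add: continuous_on_eq_continuous_at)
  qed (use \<open>L' \<circ> L = id\<close> derivative_map_inverse in auto)
  ultimately show thesis
    using that unfolding L_def by blast
qed

lemma has_derivative_inv_DF:
  "((\<lambda>x. inv (DF x) w) has_derivative (\<lambda>h. - inv (DF x) (D2F x (inv (DF x) w) h))) (at x)"
proof -
  obtain L' where L': "(inverse_derivative_map has_derivative L') (at (x, w))"
    and right_inverse: "\<And>d. (fst (L' d), DF x (snd (L' d)) + D2F x (inv (DF x) w) (fst (L' d))) = d"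
    using has_derivative_inverse_derivative_map[of x w] by metis
  have "((\<lambda>x. (x, w)) has_derivative (\<lambda>h. (h, 0))) (at x)"
    by (intro has_derivative_Pair has_derivative_ident has_derivative_const)
  from has_derivative_compose[OF this L']
  have "((\<lambda>x. snd (inverse_derivative_map (x, w))) has_derivative (\<lambda>h. snd (L' (h, 0)))) (at x)"
    by (rule has_derivative_snd)
  moreover have "snd (L' (h, 0)) = - inv (DF x) (D2F x (inv (DF x) w) h)" for h
  proof -
    have "fst (L' (h, 0)) = h" and "DF x (snd (L' (h, 0))) = - D2F x (inv (DF x) w) h"
      using right_inverse[of "(h, 0)"] by (auto simp: eq_neg_iff_add_eq_0)
    then show ?thesis
      by (metis inv_DF_DF linear_inv_DF linear_neg)
  qed
  ultimately show ?thesis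
    by (simp add: inverse_derivative_map_def)
qed

lemma inv_DF_D2F_eq_sum:
  "inv (DF x) (D2F x v h) = (\<Sum>j\<in>Basis. (v \<bullet> j) *\<^sub>R
     (\<Sum>l\<in>Basis. (frechet_derivative (\<lambda>x. DF x j) (at x) h \<bullet> l) *\<^sub>R inv (DF x) l))"
  unfolding D2F_def linear_sum[OF linear_inv_DF] linear_scale[OF linear_inv_DF]
proof (rule sum.cong[OF refl])
  fix j :: 'a
  show "(v \<bullet> j) *\<^sub>R inv (DF x) (frechet_derivative (\<lambda>x. DF x j) (at x) h) =
      (v \<bullet> j) *\<^sub>R (\<Sum>l\<in>Basis. (frechet_derivative (\<lambda>x. DF x j) (at x) h \<bullet> l) *\<^sub>R inv (DF x) l)"
    by (subst linear_eq_sum_Basis[OF linear_inv_DF]) (rule refl)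
qed

lemma Ck_inv_DF: "Ck k (\<lambda>x. inv (DF x) w)"
proof (induction k arbitrary: w)
  case 0
  have "continuous (at x) (\<lambda>x. inv (DF x) w)" for x
    by (rule has_derivative_continuous[OF has_derivative_inv_DF])
  then show ?case
    by (simp add: continuous_on_eq_continuous_at)
next
  case (Suc k)
  have "Ck k (\<lambda>x. frechet_derivative (\<lambda>x. DF x j) (at x) h \<bullet> l)" for j h l
    using Ck_DF[of "Suc k" j] by (intro Ck_bounded_linear[OF bounded_linear_inner_left]) auto
  moreover have "Ck k (\<lambda>x. inv (DF x) v \<bullet> j)" for v j
    by (intro Ck_bounded_linear[OF bounded_linear_inner_left] Suc.IH)
  ultimately have "Ck k (\<lambda>x. - inv (DF x) (D2F x (inv (DF x) w) h))" for h
    unfolding inv_DF_D2F_eq_sum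
    by (intro Ck_bounded_linear[of uminus] bounded_linear_minus bounded_linear_ident Ck_sum Ck_scaleR Suc.IH)
  then show ?case
    by (rule Ck_SucI[OF has_derivative_inv_DF])
qed

lemma smooth_map_inv:
  assumes "bij F"
  shows "smooth_map (inv F)"
proof -
  have "continuous_on UNIV F"
    using smooth Ck_imp_continuous_on by (auto simp: smooth_map_def)
  then have continuous: "continuous_on UNIV (inv F)"
    using continuous_on_inverse_open[of UNIV F "inv F"] assms
    by (simp add: bij_is_inj bij_is_surj)
  have derivative: "(inv F has_derivative inv (DF (inv F y))) (at y)" for y
  proof (rule has_derivative_inverse_basic[where T=UNIV, OF has_derivative_DF])
    show "bounded_linear (inv (DF (inv F y)))"
      using linear_inv_DF by (simp add: linear_conv_bounded_linear)
    show "continuous (at y) (inv F)"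
      using continuous by (simp add: continuous_on_eq_continuous_at)
  qed (use surj_f_inv_f[OF bij_is_surj[OF assms]] inv_DF_DF in \<open>auto simp: fun_eq_iff\<close>)
  have "Ck k (inv F)" for k
  proof (induction k)
    case 0
    then show ?case using continuous by simp
  next
    case (Suc k)
    show ?case
      by (rule Ck_SucI[OF derivative Ck_compose[OF Ck_inv_DF Suc.IH]])
  qed
  then show ?thesis
    by (simp add: smooth_map_def)
qed

end

theorem proposition1:
  fixes f :: "'a::euclidean_space \<Rightarrow> real" and lam \<delta> :: real
  assumes "lam > 0" and "\<delta> > 0"
    and "continuous_on UNIV f"
    and "\<exists>x0. \<forall>y. f x0 \<le> f y"
    and "(\<integral>\<^sup>+ y. ennreal (exp (- f y / \<delta>)) \<partial>lborel) < \<infinity>"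
  shows "smooth_map (zprox \<delta> lam f) \<and> bij (zprox \<delta> lam f)
         \<and> smooth_map (inv (zprox \<delta> lam f))"
proof -
  have continuous: "continuous_on UNIV (\<lambda>y. exp (- f y / \<delta>))"
    using assms(2,3) by (intro continuous_intros) auto
  then have "integrable lborel (\<lambda>y. exp (- f y / \<delta>))"
    using assms(5) by (intro integrableI_nonneg) (simp_all add: borel_measurable_continuous_onI)
  then interpret gaussian_tilt "lam * \<delta>" "\<lambda>y. exp (- f y / \<delta>)"
    using assms(1,2) continuous by unfold_locales simp_all
  have zprox: "zprox \<delta> lam f = mean"
    by (rule ext) (simp only: zprox_def mean_eq_gauss_density_ratio)
  have "bij mean"
    using inj_mean surj_mean by (rule bijI)
  interpret nondegenerate_smooth_map mean
    using Ck_mean inj_frechet_derivative_mean by unfold_locales (simp add: smooth_map_def)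
  show ?thesis
    unfolding zprox using Ck_mean \<open>bij mean\<close> smooth_map_inv by (simp add: smooth_map_def)
qed

end
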